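(* Let $J\in\{1,\dots,N-1\}$ be the index with $\lambda_J\le\lambda_{\rm avg}<\lambda_{J+1}$. Let $K\in\{1,\dots,J\}$ and let $h$ be a graph filter with $h(\lambda_n)\ne 0$ for $n=1,\dots,K$, and define $$\eta_K=\frac{\max\{|h(\lambda_{K+1})|,\dots,|h(\lambda_N)|\}}{\min\{|h(\lambda_1)|,\dots,|h(\lambda_K)|\}} .$$ If $$\eta_K^2<\frac{\sum_{n=1}^K(\lambda_n-\lambda_{\rm avg})}{\sum_{n=1}^J(\lambda_n-\lambda_{\rm avg})},$$ then $h$ is a smooth graph filter, i.e. $r(h)<1$. (In particular, for $K=J$, every graph filter with $\eta_J<1$ is smooth.)
   Context: Let $\mathcal G$ be an undirected, weighted, connected graph on $N\ge 2$ nodes with symmetric weighted adjacency matrix $W\in\mathbb R^{N\times N}$, $W_{k,n}\ge 0$. Its Laplacian is $L=\mathrm{diag}(W\mathbf 1)-W$, with eigendecomposition $L=V\,\mathrm{diag}(\lambda_1,\dots,\lambda_N)\,V^T$, $V$ orthogonal, and eigenvalues ordered $0=\lambda_1\le\lambda_2\le\cdots\le\lambda_N$ (connectedness gives $\lambda_2>0$). Put $\lambda_{\rm avg}=\frac1N\sum_{n=1}^N\lambda_n$. A graph filter is a real function $h$ on the eigenvalues, satisfying $h(\lambda_m)=h(\lambda_k)$ whenever $\lambda_m=\lambda_k$, acting as the matrix $h(L)=V\,\mathrm{diag}(h(\lambda_1),\dots,h(\lambda_N))\,V^T$. For a graph filter with $h(\lambda_n)$ not all zero, its smoothness ratio is $r(h)=\lambda_{\rm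 avg}^{-1}\sum_n\lambda_n h^2(\lambda_n)/\sum_n h^2(\lambda_n)$, and $h$ is called a smooth graph filter if $r(h)<1$. A graph filter with $\eta_K<1$ is called a graph low-pass filter of order $K$. *)

theory Defs
  imports Complex_Main
begin

text \<open>Graph on nodes 1..N, weights W k n, all matrices as nat-indexed functions (1-based).\<close>

definition laplacian :: "nat \<Rightarrow> (nat \<Rightarrow> nat \<Rightarrow> real) \<Rightarrow> nat \<Rightarrow> nat \<Rightarrow> real" where
  "laplacian N W k n = (if k = n then (\<Sum>m=1..N. W k m) else 0) - W k n"

definition graph_edges :: "nat \<Rightarrow> (nat \<Rightarrow> nat \<Rightarrow> real) \<Rightarrow> (nat \<times> nat) set" where
  "graph_edges N W = {(k, n). k \<in> {1..N} \<and> n \<in> {1..N} \<and> W k n > 0}"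

definition connected_graph :: "nat \<Rightarrow> (nat \<Rightarrow> nat \<Rightarrow> real) \<Rightarrow> bool" where
  "connected_graph N W \<longleftrightarrow> (\<forall>k\<in>{1..N}. \<forall>n\<in>{1..N}. (k, n) \<in> (graph_edges N W)\<^sup>*)"

definition orthogonal_mat :: "nat \<Rightarrow> (nat \<Rightarrow> nat \<Rightarrow> real) \<Rightarrow> bool" where
  "orthogonal_mat N V \<longleftrightarrow>
     (\<forall>i\<in>{1..N}. \<forall>j\<in>{1..N}. (\<Sum>m=1..N. V m i * V m j) = (if i = j then 1 else 0))"

definition eigendecomp :: "nat \<Rightarrow> (nat \<Rightarrow> nat \<Rightarrow> real) \<Rightarrow> (nat \<Rightarrow> nat \<Rightarrow> real) \<Rightarrow> (nat \<Rightarrow> real) \<Rightarrow> bool" where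
  "eigendecomp N W V lam \<longleftrightarrow> orthogonal_mat N V \<and>
     (\<forall>k\<in>{1..N}. \<forall>n\<in>{1..N}. laplacian N W k n = (\<Sum>m=1..N. V k m * lam m * V n m))"

definition lam_avg :: "nat \<Rightarrow> (nat \<Rightarrow> real) \<Rightarrow> real" where
  "lam_avg N lam = (\<Sum>n=1..N. lam n) / real N"

definition smoothness_ratio :: "nat \<Rightarrow> (nat \<Rightarrow> real) \<Rightarrow> (real \<Rightarrow> real) \<Rightarrow> real" where
  "smoothness_ratio N lam h =
     (\<Sum>n=1..N. lam n * (h (lam n))\<^sup>2) / (\<Sum>n=1..N. (h (lam n))\<^sup>2) / lam_avg N lam"

definition smooth_filter :: "nat \<Rightarrow> (nat \<Rightarrow> real) \<Rightarrow> (real \<Rightarrow> real) \<Rightarrow> bool" where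
  "smooth_filter N lam h \<longleftrightarrow> smoothness_ratio N lam h < 1"

definition eta :: "nat \<Rightarrow> (nat \<Rightarrow> real) \<Rightarrow> (real \<Rightarrow> real) \<Rightarrow> nat \<Rightarrow> real" where
  "eta N lam h K = Max ((\<lambda>n. \<bar>h (lam n)\<bar>) ` {K+1..N}) / Min ((\<lambda>n. \<bar>h (lam n)\<bar>) ` {1..K})"

end

theory Submission
  imports Defs
begin

text \<open>With \<open>d n = \<lambda>\<^sub>n - \<lambda>\<^sub>a\<^sub>v\<^sub>g\<close>, smoothness \<open>r(h) < 1\<close> amounts to \<open>\<Sum> d n h(\<lambda>\<^sub>n)\<^sup>2 < 0\<close>, since
  \<open>\<lambda>\<^sub>a\<^sub>v\<^sub>g = tr L / N \<ge> 0\<close>. The \<open>d n\<close> sum to zero, are \<open>\<le> 0\<close> for \<open>n \<le> J\<close> and \<open>> 0\<close> beyond.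
  Bounding \<open>h\<^sup>2\<close> below by \<open>min\<^sup>2\<close> on the first \<open>K\<close> terms, dropping the terms \<open>K < n \<le> J\<close>, and
  bounding \<open>h\<^sup>2\<close> above by \<open>max\<^sup>2\<close> on the terms \<open>n > J\<close>, whose \<open>d\<close>-mass equals \<open>-\<Sum>\<^sub>n\<^sub>\<le>\<^sub>J d n\<close>,
  the sum is at most \<open>min\<^sup>2 \<Sum>\<^sub>n\<^sub>\<le>\<^sub>K d n - max\<^sup>2 \<Sum>\<^sub>n\<^sub>\<le>\<^sub>J d n\<close>, which the hypothesis on \<open>\<eta>\<^sub>K\<close> makes negative.\<close>

lemma trace_eq_sum_eigenvalues:
  fixes A V :: "nat \<Rightarrow> nat \<Rightarrow> real" and lam :: "nat \<Rightarrow> real"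
  assumes "orthogonal_mat N V"
    and "\<forall>k\<in>{1..N}. \<forall>n\<in>{1..N}. A k n = (\<Sum>m=1..N. V k m * lam m * V n m)"
  shows "(\<Sum>k=1..N. A k k) = (\<Sum>m=1..N. lam m)"
proof -
  have "(\<Sum>k=1..N. A k k) = (\<Sum>k=1..N. \<Sum>m=1..N. V k m * lam m * V k m)"
    using assms(2) by (intro sum.cong) auto
  also have "\<dots> = (\<Sum>m=1..N. lam m * (\<Sum>k=1..N. V k m * V k m))"
    by (subst sum.swap) (simp add: sum_distrib_left algebra_simps)
  also have "\<dots> = (\<Sum>m=1..N. lam m)"
    using assms(1) unfolding orthogonal_mat_def by (intro sum.cong) auto
  finally show ?thesis .
qed

lemma laplacian_diag_nonneg:
  assumes "\<forall>k\<in>{1..N}. \<forall>n\<in>{1..N}. W k n \<ge> 0" and "k \<in> {1..N}"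
  shows "laplacian N W k k \<ge> 0"
proof -
  have "W k k \<le> (\<Sum>m=1..N. W k m)"
    using assms by (intro member_le_sum) auto
  thus ?thesis unfolding laplacian_def by simp
qed

lemma lam_avg_nonneg:
  assumes "\<forall>k\<in>{1..N}. \<forall>n\<in>{1..N}. W k n \<ge> 0" and "eigendecomp N W V lam"
  shows "lam_avg N lam \<ge> 0"
proof -
  have "(\<Sum>m=1..N. lam m) = (\<Sum>k=1..N. laplacian N W k k)"
    using assms(2) trace_eq_sum_eigenvalues unfolding eigendecomp_def by metis
  also have "\<dots> \<ge> 0"
    using laplacian_diag_nonneg[OF assms(1)] by (intro sum_nonneg) auto
  finally show ?thesis unfolding lam_avg_def by simp
qed

lemma sum_minus_lam_avg_eq_0:
  assumes "N \<ge> 1"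
  shows "(\<Sum>n=1..N. lam n - lam_avg N lam) = 0"
  using assms unfolding lam_avg_def by (simp add: sum_subtractf)

lemma sum_sign_change_weighted_neg:
  fixes d g :: "nat \<Rightarrow> real" and lo hi :: real
  assumes "K \<le> J" "J \<le> N"
    and "(\<Sum>n=1..N. d n) = 0"
    and "\<forall>n\<in>{1..J}. d n \<le> 0" and "\<forall>n\<in>{J+1..N}. d n \<ge> 0"
    and "\<forall>n\<in>{K+1..J}. g n \<ge> 0"
    and "\<forall>n\<in>{1..K}. lo \<le> g n" and "\<forall>n\<in>{J+1..N}. g n \<le> hi"
    and "lo * (\<Sum>n=1..K. d n) < hi * (\<Sum>n=1..J. d n)"
  shows "(\<Sum>n=1..N. d n * g n) < 0"
proof -
  have split_N: "(\<Sum>n=1..N. f n) = (\<Sum>n=1..J. f n) + (\<Sum>n=J+1..N. f n)" for f :: "nat \<Rightarrow> real"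
    using sum.ub_add_nat[of 1 J f "N - J"] assms(2) by simp
  have split_J: "(\<Sum>n=1..J. f n) = (\<Sum>n=1..K. f n) + (\<Sum>n=K+1..J. f n)" for f :: "nat \<Rightarrow> real"
    using sum.ub_add_nat[of 1 K f "J - K"] assms(1) by simp
  have low: "(\<Sum>n=1..K. d n * g n) \<le> lo * (\<Sum>n=1..K. d n)"
  proof -
    have "(\<Sum>n=1..K. d n * g n) \<le> (\<Sum>n=1..K. d n * lo)"
      using assms(1,4,7) by (intro sum_mono) (auto intro: mult_left_mono_neg)
    thus ?thesis by (simp add: sum_distrib_left mult.commute)
  qed
  have middle: "(\<Sum>n=K+1..J. d n * g n) \<le> 0"
    using assms(4,6) by (intro sum_nonpos) (auto simp: mult_nonpos_nonneg)
  have high: "(\<Sum>n=J+1..N. d n * g n) \<le> hi * (\<Sum>n=J+1..N. d n)"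
  proof -
    have "(\<Sum>n=J+1..N. d n * g n) \<le> (\<Sum>n=J+1..N. d n * hi)"
      using assms(5,8) by (intro sum_mono) (auto intro: mult_left_mono)
    thus ?thesis by (simp add: sum_distrib_left mult.commute)
  qed
  have mass: "(\<Sum>n=J+1..N. d n) = - (\<Sum>n=1..J. d n)"
    using split_N[of d] assms(3) by simp
  have "(\<Sum>n=1..N. d n * g n)
      = (\<Sum>n=1..K. d n * g n) + (\<Sum>n=K+1..J. d n * g n) + (\<Sum>n=J+1..N. d n * g n)"
    using split_N split_J by simp
  also have "\<dots> \<le> lo * (\<Sum>n=1..K. d n) + 0 + hi * (\<Sum>n=J+1..N. d n)"
    using low middle high by (intro add_mono) auto
  also have "\<dots> = lo * (\<Sum>n=1..K. d n) - hi * (\<Sum>n=1..J. d n)"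
    using mass by simp
  finally have "(\<Sum>n=1..N. d n * g n) \<le> lo * (\<Sum>n=1..K. d n) - hi * (\<Sum>n=1..J. d n)" .
  with assms(9) show ?thesis by simp
qed

lemma mult_sq_less_of_sq_divide_less_divide:
  fixes M m A B :: real
  assumes "m > 0" and "B \<le> 0" and "(M / m)\<^sup>2 < A / B"
  shows "m\<^sup>2 * A < M\<^sup>2 * B"
proof -
  have "B \<noteq> 0" using assms(3) by (metis div_by_0 not_less zero_le_power2)
  with assms(2) have "B < 0" by simp
  with assms(3) have "A < (M / m)\<^sup>2 * B" by (simp add: neg_less_divide_eq mult.commute)
  with assms(1) show ?thesis by (simp add: power_divide field_simps)
qed

lemma smooth_filter_if_centered_sum_neg:
  assumes "lam_avg N lam \<ge> 0"
    and "(\<Sum>n=1..N. (h (lam n))\<^sup>2) > 0"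
    and "(\<Sum>n=1..N. (lam n - lam_avg N lam) * (h (lam n))\<^sup>2) < 0"
  shows "smooth_filter N lam h"
proof (cases "lam_avg N lam = 0")
  case True
  \<comment> \<open>the ratio is then a division by zero, i.e.\ \<open>0\<close>\<close>
  thus ?thesis unfolding smooth_filter_def smoothness_ratio_def by simp
next
  case False
  with assms(1) have avg_pos: "lam_avg N lam > 0" by simp
  have "(\<Sum>n=1..N. lam n * (h (lam n))\<^sup>2) < lam_avg N lam * (\<Sum>n=1..N. (h (lam n))\<^sup>2)"
    using assms(3) by (simp add: algebra_simps sum_subtractf sum_distrib_left)
  with assms(2) avg_pos show ?thesis
    unfolding smooth_filter_def smoothness_ratio_def by (simp add: divide_less_eq mult.commute)
qed

theorem claim1:
  fixes N J K :: nat and W V :: "nat \<Rightarrow> nat \<Rightarrow> real" and lam :: "nat \<Rightarrow> real"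
    and h :: "real \<Rightarrow> real"
  assumes "N \<ge> 2"
    and "\<forall>k\<in>{1..N}. \<forall>n\<in>{1..N}. W k n = W n k"
    and "\<forall>k\<in>{1..N}. \<forall>n\<in>{1..N}. W k n \<ge> 0"
    and "connected_graph N W"
    and "eigendecomp N W V lam"
    and "\<forall>m\<in>{1..N}. \<forall>n\<in>{1..N}. m \<le> n \<longrightarrow> lam m \<le> lam n"
    and "J \<in> {1..N-1}" and "lam J \<le> lam_avg N lam" and "lam_avg N lam < lam (J+1)"
    and "K \<in> {1..J}"
    and "\<forall>n\<in>{1..K}. h (lam n) \<noteq> 0"
    and "(eta N lam h K)\<^sup>2 <
          (\<Sum>n=1..K. lam n - lam_avg N lam) / (\<Sum>n=1..J. lam n - lam_avg N lam)"
  shows "smooth_filter N lam h"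
proof -
  define M where "M = Max ((\<lambda>n. \<bar>h (lam n)\<bar>) ` {K+1..N})"
  define m where "m = Min ((\<lambda>n. \<bar>h (lam n)\<bar>) ` {1..K})"
  have KJN: "1 \<le> K" "K \<le> J" "J < N" using assms(7,10) by auto
  have "m \<in> (\<lambda>n. \<bar>h (lam n)\<bar>) ` {1..K}"
    unfolding m_def using KJN by (intro Min_in) auto
  with assms(11) have m_pos: "m > 0" by auto
  have lower: "\<forall>n\<in>{1..K}. m\<^sup>2 \<le> (h (lam n))\<^sup>2"
  proof
    fix n assume "n \<in> {1..K}"
    then have "m \<le> \<bar>h (lam n)\<bar>" unfolding m_def by simp
    with m_pos show "m\<^sup>2 \<le> (h (lam n))\<^sup>2" by (metis power2_abs power_mono less_imp_le)
  qed
  have upper: "\<forall>n\<in>{J+1..N}. (h (lam n))\<^sup>2 \<le> M\<^sup>2"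
  proof
    fix n assume "n \<in> {J+1..N}"
    with KJN have "\<bar>h (lam n)\<bar> \<le> M" unfolding M_def by simp
    then show "(h (lam n))\<^sup>2 \<le> M\<^sup>2" by (metis power2_abs power_mono abs_ge_zero)
  qed
  have d_nonpos: "\<forall>n\<in>{1..J}. lam n - lam_avg N lam \<le> 0"
    using assms(6,8) KJN by force
  have d_pos: "\<forall>n\<in>{J+1..N}. lam n - lam_avg N lam \<ge> 0"
    using assms(6,9) KJN by (smt (verit) atLeastAtMost_iff le_add2 le_trans)
  have "(\<Sum>n=1..J. lam n - lam_avg N lam) \<le> 0"
    using d_nonpos by (intro sum_nonpos) auto
  then have "m\<^sup>2 * (\<Sum>n=1..K. lam n - lam_avg N lam) < M\<^sup>2 * (\<Sum>n=1..J. lam n - lam_avg N lam)"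
    using mult_sq_less_of_sq_divide_less_divide[OF m_pos _ assms(12)[unfolded eta_def,
        folded M_def m_def]] by blast
  then have "(\<Sum>n=1..N. (lam n - lam_avg N lam) * (h (lam n))\<^sup>2) < 0"
    using KJN d_nonpos d_pos lower upper sum_minus_lam_avg_eq_0[of N lam]
    by (intro sum_sign_change_weighted_neg[where K = K and J = J]) auto
  moreover have "(\<Sum>n=1..N. (h (lam n))\<^sup>2) > 0"
    using assms(11) KJN by (intro sum_pos2[of _ 1]) auto
  ultimately show ?thesis
    using lam_avg_nonneg[OF assms(3,5)] smooth_filter_if_centered_sum_neg by blast
qed

end
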